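(* Let $(\mathcal{X},d)$ be a finite metric space, $P$ a probability distribution on $\mathcal{X}$, $k\ge1$ an integer, and $O\in\mathcal{X}_k$ an optimal $k$-RP solution. Then there exists a $k$-multiset $S\in\mathcal{X}_k$ all of whose points have positive probability under $P$ such that $\mathbb{E}_{X\sim P_k}[d_k(S,X)]\le 2\cdot\mathbb{E}_{X\sim P_k}[d_k(O,X)]$.
   Context: $\mathcal{X}_k$ is the set of multisets of exactly $k$ points of $\mathcal{X}$. For $U,V\in\mathcal{X}_k$, $d_k(U,V)$ is the minimum, over perfect matchings between the $k$ elements of $U$ and the $k$ elements of $V$ (with multiplicity), of the sum of the distances of matched pairs. $P_k$ is the distribution of the multiset of $k$ points drawn i.i.d. from $P$. The $k$-RP cost of $S\in\mathcal{X}_k$ is $\mathbb{E}_{X\sim P_k}[d_k(S,X)]$, and an optimal solution $O$ minimizes it over $\mathcal{X}_k$. *)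

theory Defs
  imports "HOL-Probability.Probability"
begin

definition finite_metric_space :: "'a set \<Rightarrow> ('a \<Rightarrow> 'a \<Rightarrow> real) \<Rightarrow> bool" where
  "finite_metric_space X d \<longleftrightarrow> finite X \<and>
     (\<forall>x\<in>X. \<forall>y\<in>X. (d x y = 0 \<longleftrightarrow> x = y)) \<and>
     (\<forall>x\<in>X. \<forall>y\<in>X. d x y = d y x) \<and>
     (\<forall>x\<in>X. \<forall>y\<in>X. \<forall>z\<in>X. d x z \<le> d x y + d y z)"

definition kmultisets :: "'a set \<Rightarrow> nat \<Rightarrow> 'a multiset set" where
  "kmultisets X k = {S. size S = k \<and> set_mset S \<subseteq> X}"

text \<open>d_k(U,V): minimum over perfect matchings (pairings of enumerations) of the
  total distance of matched pairs.\<close>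
definition dk :: "('a \<Rightarrow> 'a \<Rightarrow> real) \<Rightarrow> 'a multiset \<Rightarrow> 'a multiset \<Rightarrow> real" where
  "dk d U V = Min {(\<Sum>i<size U. d (xs ! i) (ys ! i)) | xs ys. mset xs = U \<and> mset ys = V}"

fun Pk :: "'a pmf \<Rightarrow> nat \<Rightarrow> 'a multiset pmf" where
  "Pk P 0 = return_pmf {#}"
| "Pk P (Suc k) = bind_pmf P (\<lambda>x. map_pmf (add_mset x) (Pk P k))"

definition krp_cost :: "('a \<Rightarrow> 'a \<Rightarrow> real) \<Rightarrow> 'a pmf \<Rightarrow> nat \<Rightarrow> 'a multiset \<Rightarrow> real" where
  "krp_cost d P k S = measure_pmf.expectation (Pk P k) (\<lambda>X. dk d S X)"

definition krp_optimal :: "'a set \<Rightarrow> ('a \<Rightarrow> 'a \<Rightarrow> real) \<Rightarrow> 'a pmf \<Rightarrow> nat \<Rightarrow> 'a multiset \<Rightarrow> bool" where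
  "krp_optimal X d P k Opt \<longleftrightarrow> Opt \<in> kmultisets X k \<and>
     (\<forall>S\<in>kmultisets X k. krp_cost d P k Opt \<le> krp_cost d P k S)"

end

theory Submission
  imports Defs
begin

text \<open>Move every point of O to a nearest point p(x) of the support of P. For y in the
  support, the triangle inequality and minimality of p(x) give
  d(p(x), y) \<le> d(p(x), x) + d(x, y) \<le> 2 d(x, y). Applying this along an optimal matching
  between O and a sample Y bounds d_k(p(O), Y) by 2 d_k(O, Y); taking expectations gives the
  factor 2.\<close>

lemma finite_mset_preimage: "finite {xs. mset xs = U}"
proof (rule finite_subset)
  show "{xs. mset xs = U} \<subseteq> {xs. set xs \<subseteq> set_mset U \<and> length xs = size U}" by auto
qed (rule finite_lists_length_eq[OF finite_set_mset])

lemma finite_matching_costs: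
  "finite {(\<Sum>i<size U. d (xs ! i) (ys ! i)) | xs ys. mset xs = U \<and> mset ys = V}"
  by (rule finite_image_set2) (rule finite_mset_preimage)+

lemma dk_le_matching:
  assumes "mset xs = U" and "mset ys = V"
  shows "dk d U V \<le> (\<Sum>i<size U. d (xs ! i) (ys ! i))"
  unfolding dk_def by (rule Min_le[OF finite_matching_costs]) (use assms in blast)

lemma dk_optimal_matching:
  obtains xs ys where "mset xs = U" and "mset ys = V"
    and "dk d U V = (\<Sum>i<size U. d (xs ! i) (ys ! i))"
proof -
  obtain xs ys where "mset xs = U" "mset ys = V" using ex_mset by metis
  then have "{(\<Sum>i<size U. d (xs ! i) (ys ! i)) | xs ys. mset xs = U \<and> mset ys = V} \<noteq> {}"
    by blast
  from Min_in[OF finite_matching_costs this] show thesis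
    using that unfolding dk_def by blast
qed

lemma dk_image_mset_le:
  assumes "size V = size U"
    and "\<And>x y. x \<in># U \<Longrightarrow> y \<in># V \<Longrightarrow> d (f x) y \<le> c * d x y"
  shows "dk d (image_mset f U) V \<le> c * dk d U V"
proof -
  obtain xs ys where xs: "mset xs = U" and ys: "mset ys = V"
    and opt: "dk d U V = (\<Sum>i<size U. d (xs ! i) (ys ! i))"
    by (rule dk_optimal_matching)
  have len: "length xs = size U" "length ys = size U"
    using xs ys assms(1) by auto
  have "dk d (image_mset f U) V \<le> (\<Sum>i<size U. d (map f xs ! i) (ys ! i))"
    using dk_le_matching[of "map f xs" "image_mset f U" ys V d] xs ys by simp
  also have "\<dots> = (\<Sum>i<size U. d (f (xs ! i)) (ys ! i))"
    by (intro sum.cong refl) (simp add: len(1))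
  also have "\<dots> \<le> (\<Sum>i<size U. c * d (xs ! i) (ys ! i))"
  proof (rule sum_mono)
    fix i assume "i \<in> {..<size U}"
    then have "i < length xs" "i < length ys" using len by simp_all
    then have "xs ! i \<in># U" "ys ! i \<in># V"
      using xs ys by (metis nth_mem set_mset_mset)+
    then show "d (f (xs ! i)) (ys ! i) \<le> c * d (xs ! i) (ys ! i)" by (rule assms(2))
  qed
  also have "\<dots> = c * dk d U V"
    by (simp add: opt sum_distrib_left)
  finally show ?thesis .
qed

lemma set_pmf_Pk: "M \<in> set_pmf (Pk P k) \<Longrightarrow> set_mset M \<subseteq> set_pmf P \<and> size M = k"
  by (induction k arbitrary: M) fastforce+

lemma finite_set_pmf_Pk: "finite (set_pmf P) \<Longrightarrow> finite (set_pmf (Pk P k))"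
  by (induction k) auto

lemma krp_cost_le_scaled:
  assumes "finite (set_pmf P)"
    and "\<And>Y. Y \<in> set_pmf (Pk P k) \<Longrightarrow> dk d S Y \<le> c * dk d T Y"
  shows "krp_cost d P k S \<le> c * krp_cost d P k T"
proof -
  have fin: "finite (set_pmf (Pk P k))" using finite_set_pmf_Pk[OF assms(1)] .
  have "krp_cost d P k S \<le> measure_pmf.expectation (Pk P k) (\<lambda>Y. c * dk d T Y)"
    unfolding krp_cost_def
    by (rule integral_mono_AE)
      (auto intro: integrable_measure_pmf_finite[OF fin] AE_pmfI assms(2))
  also have "\<dots> = c * krp_cost d P k T"
    unfolding krp_cost_def by simp
  finally show ?thesis .
qed

lemma finite_metric_spaceD:
  assumes "finite_metric_space X d"
  shows "finite X"
    and "x \<in> X \<Longrightarrow> y \<in> X \<Longrightarrow> d x y = d y x"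
    and "x \<in> X \<Longrightarrow> y \<in> X \<Longrightarrow> z \<in> X \<Longrightarrow> d x z \<le> d x y + d y z"
  using assms unfolding finite_metric_space_def by blast+

lemma arg_min_on_dist_le_double:
  assumes "finite_metric_space X d" and "A \<subseteq> X" and "A \<noteq> {}"
    and "x \<in> X" and "y \<in> A"
  shows "d (arg_min_on (d x) A) y \<le> 2 * d x y"
proof -
  let ?p = "arg_min_on (d x) A"
  have "finite A"
    using finite_subset[OF assms(2) finite_metric_spaceD(1)[OF assms(1)]] .
  then have "?p \<in> A" and nearest: "d x ?p \<le> d x y"
    using arg_min_if_finite(1) arg_min_least assms(3,5) by metis+
  then have "?p \<in> X" and "y \<in> X" using assms(2,5) by auto
  then have "d ?p y \<le> d ?p x + d x y" and "d ?p x = d x ?p"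
    using finite_metric_spaceD(2,3)[OF assms(1)] assms(4) by blast+
  with nearest show ?thesis by linarith
qed

theorem corollary1:
  fixes X :: "'a set" and d :: "'a \<Rightarrow> 'a \<Rightarrow> real" and P :: "'a pmf"
    and k :: nat and Opt :: "'a multiset"
  assumes "finite_metric_space X d"
    and "set_pmf P \<subseteq> X"
    and "k \<ge> 1"
    and "krp_optimal X d P k Opt"
  shows "\<exists>S\<in>kmultisets X k. (\<forall>x\<in>#S. pmf P x > 0) \<and>
           krp_cost d P k S \<le> 2 * krp_cost d P k Opt"
proof -
  have finite_P: "finite (set_pmf P)"
    using finite_subset[OF assms(2) finite_metric_spaceD(1)[OF assms(1)]] .
  define p where "p x = arg_min_on (d x) (set_pmf P)" for x
  define S where "S = image_mset p Opt"
  have Opt: "set_mset Opt \<subseteq> X" "size Opt = k"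
    using assms(4) unfolding krp_optimal_def kmultisets_def by auto
  have "p x \<in> set_pmf P" for x
    unfolding p_def by (rule arg_min_if_finite(1)[OF finite_P set_pmf_not_empty])
  then have "S \<in> kmultisets X k" and "\<forall>x\<in>#S. pmf P x > 0"
    using Opt assms(2) by (auto simp: S_def kmultisets_def pmf_positive)
  moreover have "krp_cost d P k S \<le> 2 * krp_cost d P k Opt"
  proof (rule krp_cost_le_scaled[OF finite_P])
    fix Y assume "Y \<in> set_pmf (Pk P k)"
    then have "set_mset Y \<subseteq> set_pmf P" and "size Y = size Opt"
      using set_pmf_Pk Opt(2) by auto
    then show "dk d S Y \<le> 2 * dk d Opt Y"
      unfolding S_def p_def using Opt(1)
      by (intro dk_image_mset_le arg_min_on_dist_le_double[OF assms(1,2) set_pmf_not_empty]) auto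
  qed
  ultimately show ?thesis by blast
qed

end
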